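(* Let $n\ge k\ge 2$ be integers. If $\mathcal{F}\subseteq\mathbb{Z}_{2^n}$ does not contain a projective $2^{k-1}$-cube, then $|\mathcal{F}|\le |L_1\cup L_2\cup\dots\cup L_{k-1}|$.
   Context: All arithmetic is in $\mathbb{Z}_{2^n}$. For a multiset $S=\{a_1,\dots,a_d\}$ of $d$ (not necessarily distinct) elements of $\mathbb{Z}_{2^n}$, the projective $d$-cube generated by $S$ is the set $\Sigma^*S=\{\sum_{i\in I}a_i \bmod 2^n:\emptyset\ne I\subseteq[d]\}$ (viewed as a set). A set $A\subseteq\mathbb{Z}_{2^n}$ contains a projective $d$-cube if there is a multiset $S$ of size $d$ with $\Sigma^*S\subseteq A$. Layers: for $1\le i\le n$, $L_i=\{x\in\mathbb{Z}_{2^n}: x\equiv 2^{i-1}\pmod{2^i}\}$, and $L_{n+1}=\{0\}$; thus $|L_i|=2^{n-i}$ for $i\le n$. *)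

theory Defs
  imports Main
begin

text \<open>Elements of Z_{2^n} are represented by their canonical residues in {0..<2^n}.
A multiset of d elements is represented by a list of length d.\<close>

definition proj_cube :: "nat \<Rightarrow> nat list \<Rightarrow> nat set" where
  "proj_cube n S = {(\<Sum>i\<in>I. S ! i) mod 2^n | I. I \<subseteq> {..<length S} \<and> I \<noteq> {}}"

definition contains_proj_cube :: "nat \<Rightarrow> nat \<Rightarrow> nat set \<Rightarrow> bool" where
  "contains_proj_cube n d A \<longleftrightarrow>
     (\<exists>S. length S = d \<and> set S \<subseteq> {..<2^n} \<and> proj_cube n S \<subseteq> A)"

definition layer :: "nat \<Rightarrow> nat \<Rightarrow> nat set" where
  "layer n i = (if i = n + 1 then {0}
               else {x. x < 2^n \<and> x mod 2^i = 2^(i-1)})"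

end

theory Submission
  imports Defs "HOL-Number_Theory.Cong"
begin

text \<open>Put \<open>j = k - 1\<close>. The layers \<open>L\<^sub>1, ..., L\<^sub>j\<close> together are exactly the residues not
  divisible by \<open>2^j\<close>, so their union has \<open>2^n - 2^(n-j)\<close> elements. If \<open>F\<close> is larger, its
  complement \<open>C\<close> satisfies \<open>|C| 2^j < 2^n\<close>, and a projective \<open>2^j\<close>-cube inside \<open>F\<close> is built
  from \<open>a\<close> repeated \<open>2^j - 1\<close> times plus one element \<open>b\<close>: its sums are the multiples \<open>m a\<close>
  (\<open>0 < m < 2^j\<close>) and the translates \<open>b + m a\<close> (\<open>m < 2^j\<close>). For any \<open>a\<close> a union bound yields
  a suitable \<open>b\<close>. To find \<open>a\<close> one counts only odd \<open>a\<close>: for fixed \<open>c\<close> the equation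
  \<open>i a = c\<close> has at most \<open>2^(j-1)\<close> solutions \<open>(a, i)\<close> with \<open>a\<close> odd and \<open>0 < i < 2^j\<close>, while
  there are \<open>2^(n-1)\<close> odd residues.\<close>

lemma even_mod_pow2_iff: "0 < n \<Longrightarrow> even ((x::nat) mod 2^n) \<longleftrightarrow> even x"
  by (metis dvd_mod_iff dvd_power)

lemma card_odd_less: "card {i::nat. i < 2 * t \<and> odd i} = t"
proof -
  have "{i::nat. i < 2 * t \<and> odd i} = (\<lambda>s. 2 * s + 1) ` {..<t}"
    by (auto elim!: oddE)
  moreover have "inj_on (\<lambda>s::nat. 2 * s + 1) {..<t}"
    by (auto simp: inj_on_def)
  ultimately show ?thesis
    by (simp add: card_image)
qed

lemma card_dvd_less: "0 < d \<Longrightarrow> card {x::nat. x < d * m \<and> d dvd x} = m"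
proof -
  assume "0 < d"
  then have "{x::nat. x < d * m \<and> d dvd x} = (\<lambda>y. d * y) ` {..<m}"
    by (auto elim!: dvdE)
  moreover have "inj_on (\<lambda>y. d * y) {..<m}"
    using \<open>0 < d\<close> by (auto simp: inj_on_def)
  ultimately show ?thesis
    by (simp add: card_image)
qed

lemma not_dvd_pow2_imp_mod_pow2:
  assumes "\<not> (2::nat)^j dvd x"
  shows "\<exists>i\<in>{1..j}. x mod 2^i = 2^(i - 1)"
  using assms
proof (induction j)
  case 0
  then show ?case by simp
next
  case (Suc j)
  show ?case
  proof (cases "2^j dvd x")
    case True
    then obtain y where x: "x = 2^j * y" by blast
    with Suc.prems have "odd y" by auto
    have "x mod 2^Suc j = 2^j * (y mod 2)"
      unfolding x power_Suc2 by (rule mod_mult_mult1)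
    with \<open>odd y\<close> have "x mod 2^Suc j = 2^(Suc j - 1)"
      by (simp add: odd_iff_mod_2_eq_one)
    then show ?thesis
      by force
  next
    case False
    then show ?thesis
      using Suc.IH by auto
  qed
qed

lemma union_layers_eq:
  assumes "j \<le> n"
  shows "(\<Union>i\<in>{1..j}. layer n i) = {x. x < 2^n \<and> \<not> 2^j dvd x}"
proof (intro equalityI subsetI)
  fix x assume "x \<in> (\<Union>i\<in>{1..j}. layer n i)"
  then obtain i where i: "1 \<le> i" "i \<le> j" and x: "x < 2^n" "x mod 2^i = 2^(i - 1)"
    using assms by (auto simp: layer_def split: if_splits)
  then have "\<not> 2^i dvd x"
    by auto
  moreover have "(2::nat)^i dvd 2^j"
    using i by (simp add: le_imp_power_dvd)
  ultimately show "x \<in> {x. x < 2^n \<and> \<not> 2^j dvd x}"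
    using x dvd_trans by blast
next
  fix x :: nat assume "x \<in> {x. x < 2^n \<and> \<not> 2^j dvd x}"
  with not_dvd_pow2_imp_mod_pow2 obtain i where "i \<in> {1..j}" "x mod 2^i = 2^(i - 1)" "x < 2^n"
    by blast
  with assms show "x \<in> (\<Union>i\<in>{1..j}. layer n i)"
    by (auto simp: layer_def)
qed

lemma card_union_layers:
  assumes "j \<le> n"
  shows "card (\<Union>i\<in>{1..j}. layer n i) = 2^n - 2^(n - j)"
proof -
  have pow: "(2::nat)^n = 2^j * 2^(n - j)"
    using assms by (simp flip: power_add)
  have "card {x::nat. x < 2^n \<and> 2^j dvd x} = 2^(n - j)"
    unfolding pow by (rule card_dvd_less) simp
  moreover have "{x. x < 2^n \<and> \<not> 2^j dvd x} = {..<2^n} - {x::nat. x < 2^n \<and> 2^j dvd x}"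
    by auto
  moreover have "card ({..<2^n} - {x::nat. x < 2^n \<and> 2^j dvd x})
      = 2^n - card {x::nat. x < 2^n \<and> 2^j dvd x}"
    by (subst card_Diff_subset) auto
  ultimately show ?thesis
    using union_layers_eq[OF assms] by simp
qed

definition odd_mult_pairs :: "nat \<Rightarrow> nat \<Rightarrow> nat \<Rightarrow> (nat \<times> nat) set" where
  "odd_mult_pairs n j c = {(a, i). a < 2^n \<and> odd a \<and> 0 < i \<and> i < 2^j \<and> i * a mod 2^n = c}"

lemma finite_odd_mult_pairs: "finite (odd_mult_pairs n j c)"
  by (rule finite_subset[of _ "{..<2^n} \<times> {..<2^j}"]) (auto simp: odd_mult_pairs_def)

lemma card_odd_mult_pairs_odd:
  assumes "odd c" "0 < n"
  shows "card (odd_mult_pairs n (Suc j) c) \<le> 2^j"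
proof -
  have odd_i: "odd i" if "(a, i) \<in> odd_mult_pairs n (Suc j) c" for a i
  proof -
    have "odd (i * a mod 2^n)"
      using that assms(1) by (simp add: odd_mult_pairs_def)
    then show "odd i"
      using even_mod_pow2_iff[OF assms(2)] by simp
  qed
  have "inj_on snd (odd_mult_pairs n (Suc j) c)"
  proof (rule inj_onI)
    fix p q
    assume p: "p \<in> odd_mult_pairs n (Suc j) c" and q: "q \<in> odd_mult_pairs n (Suc j) c"
      and "snd p = snd q"
    then obtain a a' i where pq: "p = (a, i)" "q = (a', i)"
      by (metis prod.collapse)
    with p q have "i * a mod 2^n = i * a' mod 2^n" "a < 2^n" "a' < 2^n"
      by (simp_all add: odd_mult_pairs_def)
    moreover have "odd i"
      using odd_i p pq by simp
    ultimately have "[i * a = i * a'] (mod 2^n)"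
      by (simp add: cong_def)
    with \<open>odd i\<close> have "[a = a'] (mod 2^n)"
      by (simp add: cong_mult_lcancel_nat)
    then show "p = q"
      using \<open>a < 2^n\<close> \<open>a' < 2^n\<close> pq by (simp add: cong_less_modulus_unique_nat)
  qed
  moreover have "snd ` odd_mult_pairs n (Suc j) c \<subseteq> {i. i < 2 * 2^j \<and> odd i}"
    using odd_i by (auto simp: odd_mult_pairs_def)
  then have "card (snd ` odd_mult_pairs n (Suc j) c) \<le> card {i::nat. i < 2 * 2^j \<and> odd i}"
    by (simp add: card_mono)
  ultimately show ?thesis
    by (simp add: card_image card_odd_less)
qed

lemma odd_mult_pairs_even_subset:
  assumes "even c" "0 < m"
  shows "odd_mult_pairs (Suc m) (Suc j) c
    \<subseteq> (\<lambda>((a, i), t). (a + t * 2^m, 2 * i)) ` (odd_mult_pairs m j (c div 2) \<times> {0, 1})"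
proof
  fix p assume "p \<in> odd_mult_pairs (Suc m) (Suc j) c"
  then obtain a i where p: "p = (a, i)" and a: "a < 2 * 2^m" "odd a"
    and i: "0 < i" "i < 2 * 2^j" and c: "i * a mod (2 * 2^m) = c"
    unfolding odd_mult_pairs_def by auto
  have "even (i * a mod 2^Suc m)"
    using c assms(1) by simp
  then have "even i"
    using a(2) even_mod_pow2_iff[of "Suc m" "i * a"] by simp
  then obtain i' where i': "i = 2 * i'"
    by (elim evenE)
  have "2 * (i' * a mod 2^m) = c"
    using c by (simp add: i' mult.assoc mod_mult_mult1)
  then have "i' * (a mod 2^m) mod 2^m = c div 2"
    by (simp add: mod_mult_right_eq)
  moreover have "odd (a mod 2^m)"
    using a(2) assms(2) even_mod_pow2_iff by blast
  moreover have "a mod 2^m < 2^m" "0 < i'" "i' < 2^j"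
    using i i' by simp_all
  ultimately have "(a mod 2^m, i') \<in> odd_mult_pairs m j (c div 2)"
    by (simp add: odd_mult_pairs_def)
  moreover have "a div 2^m < 2"
    using less_mult_imp_div_less[of a 2 "2^m"] a(1) by (simp add: mult.commute)
  then have "a div 2^m \<in> {0, 1}"
    by auto
  moreover have "p = (a mod 2^m + a div 2^m * 2^m, 2 * i')"
    by (simp add: p i' mod_div_mult_eq)
  ultimately show "p \<in> (\<lambda>((a, i), t). (a + t * 2^m, 2 * i)) ` (odd_mult_pairs m j (c div 2) \<times> {0, 1})"
    by (intro image_eqI[of _ _ "((a mod 2^m, i'), a div 2^m)"]) simp_all
qed

lemma card_odd_mult_pairs:
  assumes "j < n"
  shows "2 * card (odd_mult_pairs n j c) \<le> 2^j"
  using assms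
proof (induction j arbitrary: n c)
  case 0
  have "odd_mult_pairs n 0 c = {}"
    by (auto simp: odd_mult_pairs_def)
  then show ?case
    by simp
next
  case (Suc j)
  then obtain m where n: "n = Suc m" and "j < m"
    by (cases n) auto
  show ?case
  proof (cases "odd c")
    case True
    then show ?thesis
      using card_odd_mult_pairs_odd[of c n j] n by simp
  next
    case False
    with n \<open>j < m\<close> have "odd_mult_pairs n (Suc j) c
        \<subseteq> (\<lambda>((a, i), t). (a + t * 2^m, 2 * i)) ` (odd_mult_pairs m j (c div 2) \<times> {0, 1})"
      using odd_mult_pairs_even_subset by simp
    then have "card (odd_mult_pairs n (Suc j) c) \<le> card (odd_mult_pairs m j (c div 2) \<times> {0::nat, 1})"
      by (rule surj_card_le[rotated]) (simp add: finite_odd_mult_pairs)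
    then show ?thesis
      using Suc.IH[OF \<open>j < m\<close>, of "c div 2"] by (simp add: card_cartesian_product)
  qed
qed

lemma exists_odd_multiples_avoiding:
  fixes C :: "nat set"
  assumes "j < n" "finite C" "card C * 2^j < 2^n"
  shows "\<exists>a<2^n. odd a \<and> (\<forall>i. 0 < i \<and> i < 2^j \<longrightarrow> i * a mod 2^n \<notin> C)"
proof (rule ccontr)
  assume no_good: "\<not> ?thesis"
  define Bad where "Bad = (\<Union>c\<in>C. odd_mult_pairs n j c)"
  have "2 * card Bad \<le> (\<Sum>c\<in>C. 2 * card (odd_mult_pairs n j c))"
    unfolding Bad_def sum_distrib_left[symmetric] using assms(2) by (simp add: card_UN_le)
  also have "\<dots> \<le> card C * 2^j"
    using sum_mono[of C "\<lambda>c. 2 * card (odd_mult_pairs n j c)" "\<lambda>_. 2^j"]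
      card_odd_mult_pairs[OF assms(1)] by simp
  finally have "2 * card Bad < 2^n"
    using assms(3) by linarith
  have pow: "(2::nat)^n = 2 * 2^(n - 1)"
    using assms(1) by (cases n) simp_all
  have "finite Bad"
    unfolding Bad_def using assms(2) finite_odd_mult_pairs by blast
  have "{a. a < 2 * 2^(n - 1) \<and> odd a} \<subseteq> fst ` Bad"
  proof
    fix a :: nat assume "a \<in> {a. a < 2 * 2^(n - 1) \<and> odd a}"
    then have "a < 2^n" "odd a"
      using pow by simp_all
    with no_good obtain i where "0 < i" "i < 2^j" "i * a mod 2^n \<in> C"
      by blast
    with \<open>a < 2^n\<close> \<open>odd a\<close> have "(a, i) \<in> Bad"
      unfolding Bad_def odd_mult_pairs_def by blast
    then show "a \<in> fst ` Bad"
      by force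
  qed
  then have "card {a::nat. a < 2 * 2^(n - 1) \<and> odd a} \<le> card (fst ` Bad)"
    using \<open>finite Bad\<close> by (simp add: card_mono)
  also have "\<dots> \<le> card Bad"
    using \<open>finite Bad\<close> by (rule card_image_le)
  finally have "2^(n - 1) \<le> card Bad"
    by (simp add: card_odd_less)
  then show False
    using \<open>2 * card Bad < 2^n\<close> pow by simp
qed

lemma exists_shift_avoiding:
  fixes f :: "nat \<Rightarrow> nat"
  assumes "finite C" "card C * m < N"
  shows "\<exists>b<N. \<forall>i<m. (b + f i) mod N \<notin> C"
proof (rule ccontr)
  assume no_good: "\<not> ?thesis"
  define B where "B i = {b. b < N \<and> (b + f i) mod N \<in> C}" for i
  have card_B: "card (B i) \<le> card C" for i
  proof (rule card_inj_on_le)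
    show "inj_on (\<lambda>b. (b + f i) mod N) (B i)"
    proof (rule inj_onI)
      fix b b' assume "b \<in> B i" "b' \<in> B i" "(b + f i) mod N = (b' + f i) mod N"
      then have "[b + f i = b' + f i] (mod N)" "b < N" "b' < N"
        by (simp_all add: B_def cong_def)
      then show "b = b'"
        by (simp add: cong_add_rcancel_nat cong_less_modulus_unique_nat)
    qed
  qed (use assms(1) in \<open>auto simp: B_def\<close>)
  have "{..<N} \<subseteq> (\<Union>i<m. B i)"
    using no_good by (auto simp: B_def)
  then have "N \<le> card (\<Union>i<m. B i)"
    using card_mono[of "\<Union>i<m. B i" "{..<N}"] by (simp add: B_def)
  also have "\<dots> \<le> (\<Sum>i<m. card (B i))"
    by (rule card_UN_le) simp
  also have "\<dots> \<le> card C * m"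
    using sum_mono[of "{..<m}" "\<lambda>i. card (B i)" "\<lambda>_. card C"] card_B by (simp add: mult.commute)
  finally show False
    using assms(2) by simp
qed

lemma sum_nth_replicate_append:
  assumes "I \<subseteq> {..<L}"
  shows "(\<Sum>i\<in>I. (replicate L a @ xs) ! i) = card I * a"
proof -
  have "(\<Sum>i\<in>I. (replicate L a @ xs) ! i) = (\<Sum>i\<in>I. a)"
    using assms by (intro sum.cong) (auto simp: nth_append)
  then show ?thesis
    by simp
qed

lemma proj_cube_replicate_snoc_subset:
  "proj_cube n (replicate L a @ [b])
     \<subseteq> {m * a mod 2^n | m. 0 < m \<and> m \<le> L} \<union> {(b + m * a) mod 2^n | m. m \<le> L}"
proof
  fix x assume "x \<in> proj_cube n (replicate L a @ [b])"
  then obtain I where I: "I \<subseteq> {..<Suc L}" "I \<noteq> {}"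
    and x: "x = (\<Sum>i\<in>I. (replicate L a @ [b]) ! i) mod 2^n"
    by (auto simp: proj_cube_def)
  have "finite I"
    using I(1) finite_subset by blast
  show "x \<in> {m * a mod 2^n | m. 0 < m \<and> m \<le> L} \<union> {(b + m * a) mod 2^n | m. m \<le> L}"
  proof (cases "L \<in> I")
    case True
    have rest: "I - {L} \<subseteq> {..<L}"
      using I(1) by auto
    have "(\<Sum>i\<in>I. (replicate L a @ [b]) ! i)
        = (replicate L a @ [b]) ! L + (\<Sum>i\<in>I - {L}. (replicate L a @ [b]) ! i)"
      using sum.remove[OF \<open>finite I\<close> True] by simp
    also have "\<dots> = b + card (I - {L}) * a"
      using sum_nth_replicate_append[OF rest] by (simp add: nth_append)
    finally have "x = (b + card (I - {L}) * a) mod 2^n"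
      using x by simp
    moreover have "card (I - {L}) \<le> L"
      using card_mono[OF _ rest] by simp
    ultimately show ?thesis
      by blast
  next
    case False
    then have sub: "I \<subseteq> {..<L}"
      using I(1) by (auto simp: less_Suc_eq)
    then have "x = card I * a mod 2^n"
      using x sum_nth_replicate_append[OF sub] by simp
    moreover have "0 < card I" "card I \<le> L"
      using I(2) \<open>finite I\<close> card_mono[OF _ sub] by (simp_all add: card_gt_0_iff)
    ultimately show ?thesis
      by blast
  qed
qed

lemma contains_proj_cube_if_card_complement_less:
  assumes "j < n" and small: "card ({..<2^n} - F) * 2^j < 2^n"
  shows "contains_proj_cube n (2^j) F"
proof -
  let ?C = "{..<2^n} - F"
  obtain a where a: "a < 2^n" and mult_a: "\<forall>i. 0 < i \<and> i < 2^j \<longrightarrow> i * a mod 2^n \<notin> ?C"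
    using exists_odd_multiples_avoiding[OF assms(1) _ small] by blast
  obtain b where b: "b < 2^n" and shift_b: "\<forall>i<2^j. (b + i * a) mod 2^n \<notin> ?C"
    using exists_shift_avoiding[OF _ small, of "\<lambda>i. i * a"] by blast
  have below: "m < 2^j" if "m \<le> 2^j - 1" for m :: nat
    using order_le_less_trans[OF that, of "2^j"] by simp
  have "{m * a mod 2^n | m. 0 < m \<and> m \<le> 2^j - 1} \<subseteq> F"
    using mult_a below by fastforce
  moreover have "{(b + m * a) mod 2^n | m. m \<le> 2^j - 1} \<subseteq> F"
    using shift_b below by fastforce
  ultimately have "proj_cube n (replicate (2^j - 1) a @ [b]) \<subseteq> F"
    by (intro subset_trans[OF proj_cube_replicate_snoc_subset] Un_least)
  with a b show ?thesis
    unfolding contains_proj_cube_def by (intro exI[of _ "replicate (2^j - 1) a @ [b]"]) auto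
qed

theorem theorem1p6:
  fixes n k :: nat and F :: "nat set"
  assumes "2 \<le> k" and "k \<le> n"
    and "F \<subseteq> {..<2^n}"
    and "\<not> contains_proj_cube n (2^(k-1)) F"
  shows "card F \<le> card (\<Union>i\<in>{1..k-1}. layer n i)"
proof (rule ccontr)
  define j where "j = k - 1"
  have "j < n" "(2::nat)^(n - j) \<le> 2^n"
    using assms(1,2) by (simp_all add: j_def)
  assume "\<not> ?thesis"
  then have "2^n - 2^(n - j) < card F"
    using card_union_layers[of j n] \<open>j < n\<close> by (simp add: j_def)
  moreover have "card ({..<2^n} - F) = 2^n - card F" "card F \<le> 2^n"
    using assms(3) card_mono[OF finite_lessThan assms(3)]
    by (simp_all add: card_Diff_subset finite_subset)
  ultimately have "card ({..<2^n} - F) < 2^(n - j)"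
    using \<open>2^(n - j) \<le> 2^n\<close> by linarith
  then have "card ({..<2^n} - F) * 2^j < 2^(n - j) * 2^j"
    by simp
  also have "\<dots> = 2^n"
    using \<open>j < n\<close> by (simp flip: power_add)
  finally show False
    using contains_proj_cube_if_card_complement_less[OF \<open>j < n\<close>] assms(4) by (simp add: j_def)
qed

end
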